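(* There exist a compact Hausdorff abelian group $G$ and Čech-analytic sets $A,B\subset G$ such that $A+B$ is not Čech-analytic.
   Context: Let $X$ be a compact Hausdorff space. A set $A\subset X$ is Čech-analytic if $A$ is the projection onto $X$ of a subset of $X\times\mathbb{N}^{\mathbb{N}}$ that is the intersection of a closed set with a $G_\delta$ set (here $\mathbb{N}^{\mathbb{N}}$ carries the product topology). *)

theory Defs
  imports "HOL-Analysis.Analysis" "HOL-Algebra.Coset"
begin

definition baire_space :: "(nat \<Rightarrow> nat) topology" where
  "baire_space = product_topology (\<lambda>_::nat. discrete_topology (UNIV::nat set)) UNIV"

definition cech_analytic :: "'a topology \<Rightarrow> 'a set \<Rightarrow> bool" where
  "cech_analytic X A \<longleftrightarrow>
     (\<exists>F H. closedin (prod_topology X baire_space) F \<and>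
            gdelta_in (prod_topology X baire_space) H \<and>
            A = fst ` (F \<inter> H))"

definition topological_group :: "('a, 'b) monoid_scheme \<Rightarrow> 'a topology \<Rightarrow> bool" where
  "topological_group G T \<longleftrightarrow> group G \<and> topspace T = carrier G \<and>
     continuous_map (prod_topology T T) T (\<lambda>(x, y). x \<otimes>\<^bsub>G\<^esub> y) \<and>
     continuous_map T T (\<lambda>x. inv\<^bsub>G\<^esub> x)"

end

theory Submission
  imports Defs
begin

text \<open>Take \<open>G = 2\<^sup>I\<close>, the power set of an index set \<open>I\<close> of size continuum under symmetric
  difference, with the product topology. A Cech-analytic subset of the Cantor space is determined by
  countably many basic cylinders, hence coded by a point of the Cantor space, and the diagonal set
  \<open>S\<close> of codes not belonging to the set they code is not Cech-analytic. Embed the Cantor space into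
  \<open>G\<close> along countably many coordinates and give every \<open>f\<close> a private marker coordinate \<open>m f\<close>.
  Then \<open>A = {embed f + {m f} | f \<in> S}\<close> and \<open>B = {{m f} | f}\<close> are closed subsets of open sets,
  hence Cech-analytic, but \<open>A + B\<close> meets the embedded Cantor space exactly in the image of \<open>S\<close>,
  and Cech-analytic sets are stable under continuous preimages.\<close>

definition cantor_cube :: "('a \<Rightarrow> bool) topology" where
  "cantor_cube = product_topology (\<lambda>_. discrete_topology UNIV) UNIV"

definition powerset_cube :: "'a set topology" where
  "powerset_cube = pullback_topology UNIV (\<lambda>X i. i \<in> X) cantor_cube"

lemma topspace_cantor_cube [simp]: "topspace cantor_cube = UNIV"
  by (simp add: cantor_cube_def)

lemma topspace_powerset_cube [simp]: "topspace powerset_cube = UNIV"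
  by (simp add: powerset_cube_def topspace_pullback_topology)

lemma continuous_map_powerset_cube_iff:
  "continuous_map X powerset_cube g \<longleftrightarrow>
     (\<forall>i. continuous_map X (discrete_topology UNIV) (\<lambda>x. i \<in> g x))"
proof -
  have "continuous_map X powerset_cube g \<longleftrightarrow> continuous_map X cantor_cube (\<lambda>x i. i \<in> g x)"
  proof
    assume "continuous_map X powerset_cube g"
    moreover have "continuous_map powerset_cube cantor_cube (\<lambda>X i. i \<in> X)"
      using continuous_map_pullback[of cantor_cube cantor_cube id UNIV]
      by (simp add: powerset_cube_def)
    ultimately show "continuous_map X cantor_cube (\<lambda>x i. i \<in> g x)"
      using continuous_map_compose[of X powerset_cube g cantor_cube "\<lambda>X i. i \<in> X"] by (simp add: o_def)
  next
    assume "continuous_map X cantor_cube (\<lambda>x i. i \<in> g x)"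
    then show "continuous_map X powerset_cube g"
      unfolding powerset_cube_def by (intro continuous_map_pullback') (auto simp: o_def)
  qed
  then show ?thesis
    by (simp add: cantor_cube_def continuous_map_componentwise_UNIV)
qed

lemma continuous_map_powerset_cube_mem:
  "continuous_map powerset_cube (discrete_topology UNIV) (\<lambda>X. i \<in> X)"
  using continuous_map_powerset_cube_iff[of powerset_cube id] by auto

lemma openin_powerset_cube_mem: "openin powerset_cube {X. i \<in> X}"
  using openin_continuous_map_preimage[OF continuous_map_powerset_cube_mem, of "{True}"] by simp

lemma closedin_powerset_cube_not_mem: "closedin powerset_cube {X. i \<notin> X}"
  using closedin_continuous_map_preimage[OF continuous_map_powerset_cube_mem, of "{False}"] by simp

lemma powerset_cube_homeomorphic_cantor_cube:
  "(powerset_cube :: 'a set topology) homeomorphic_space (cantor_cube :: ('a \<Rightarrow> bool) topology)"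
proof -
  have "homeomorphic_maps powerset_cube (cantor_cube :: ('a \<Rightarrow> bool) topology) (\<lambda>X i. i \<in> X) Collect"
    unfolding homeomorphic_maps_def
    by (auto simp: continuous_map_powerset_cube_iff cantor_cube_def continuous_map_componentwise_UNIV
        intro: continuous_map_product_projection continuous_map_powerset_cube_mem)
  then show ?thesis
    unfolding homeomorphic_space_def by blast
qed

lemma compact_space_powerset_cube: "compact_space powerset_cube"
  using homeomorphic_compact_space[OF powerset_cube_homeomorphic_cantor_cube]
  by (simp add: cantor_cube_def compact_space_product_topology compact_space_discrete_topology)

lemma Hausdorff_space_powerset_cube: "Hausdorff_space powerset_cube"
  using homeomorphic_Hausdorff_space[OF powerset_cube_homeomorphic_cantor_cube]
  by (simp add: cantor_cube_def Hausdorff_space_product_topology)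

definition symdiff_group :: "'a set monoid" where
  "symdiff_group = \<lparr>carrier = UNIV, mult = (\<lambda>X Y. (X - Y) \<union> (Y - X)), one = {}\<rparr>"

lemma symdiff_group_simps [simp]:
  "carrier symdiff_group = UNIV"
  "X \<otimes>\<^bsub>symdiff_group\<^esub> Y = (X - Y) \<union> (Y - X)"
  "\<one>\<^bsub>symdiff_group\<^esub> = {}"
  by (simp_all add: symdiff_group_def)

lemma comm_group_symdiff_group: "comm_group symdiff_group"
proof (rule comm_groupI)
  fix X Y Z :: "'a set"
  show "X \<otimes>\<^bsub>symdiff_group\<^esub> Y \<otimes>\<^bsub>symdiff_group\<^esub> Z =
        X \<otimes>\<^bsub>symdiff_group\<^esub> (Y \<otimes>\<^bsub>symdiff_group\<^esub> Z)"
    by auto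
  show "\<exists>Y\<in>carrier symdiff_group. Y \<otimes>\<^bsub>symdiff_group\<^esub> X = \<one>\<^bsub>symdiff_group\<^esub>"
    by (rule bexI[of _ X]) auto
qed auto

lemma m_inv_symdiff_group: "m_inv symdiff_group = id"
proof
  interpret comm_group symdiff_group
    by (rule comm_group_symdiff_group)
  show "inv\<^bsub>symdiff_group\<^esub> X = id X" for X
    by (rule inv_equality) auto
qed

lemma continuous_map_mem_symdiff:
  "continuous_map (prod_topology powerset_cube powerset_cube) (discrete_topology UNIV)
     (\<lambda>p. i \<in> (case p of (X, Y) \<Rightarrow> X \<otimes>\<^bsub>symdiff_group\<^esub> Y))"
proof -
  have membership: "continuous_map (prod_topology powerset_cube powerset_cube)
      (prod_topology (discrete_topology UNIV) (discrete_topology UNIV)) (\<lambda>(X, Y). (i \<in> X, i \<in> Y))"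
    by (simp add: continuous_map_prod_top continuous_map_powerset_cube_mem)
  have xor: "continuous_map (prod_topology (discrete_topology UNIV) (discrete_topology UNIV))
      (discrete_topology UNIV) (\<lambda>(a, b :: bool). a \<noteq> b)"
    unfolding prod_topology_discrete_topology[symmetric] by simp
  have "(\<lambda>p. i \<in> (case p of (X, Y) \<Rightarrow> X \<otimes>\<^bsub>symdiff_group\<^esub> Y)) =
        (\<lambda>(a, b). a \<noteq> b) \<circ> (\<lambda>(X, Y). (i \<in> X, i \<in> Y))"
    by (auto simp: fun_eq_iff)
  then show ?thesis
    using continuous_map_compose[OF membership xor] by (simp only:)
qed

lemma topological_group_symdiff_group: "topological_group symdiff_group powerset_cube"
  unfolding topological_group_def
proof (intro conjI)
  show "group symdiff_group"
    using comm_group_symdiff_group comm_group_def by blast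
  show "continuous_map (prod_topology powerset_cube powerset_cube) powerset_cube
          (\<lambda>(X, Y). X \<otimes>\<^bsub>symdiff_group\<^esub> Y)"
    unfolding continuous_map_powerset_cube_iff using continuous_map_mem_symdiff by blast
qed (simp_all add: m_inv_symdiff_group)

lemma topspace_baire_space [simp]: "topspace baire_space = UNIV"
  by (simp add: baire_space_def)

lemma cech_analytic_closedin_Int_openin:
  assumes "closedin X E" "openin X U"
  shows "cech_analytic X (E \<inter> U)"
  unfolding cech_analytic_def
proof (intro exI conjI)
  show "closedin (prod_topology X baire_space) (E \<times> UNIV)"
    using assms(1) closedin_topspace[of baire_space] by (simp add: closedin_prod_Times_iff)
  show "gdelta_in (prod_topology X baire_space) (U \<times> UNIV)"
    using assms(2) openin_topspace[of baire_space] by (simp add: openin_prod_Times_iff open_imp_gdelta_in)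
  show "E \<inter> U = fst ` (E \<times> UNIV \<inter> U \<times> (UNIV :: (nat \<Rightarrow> nat) set))"
    by force
qed

lemma gdelta_in_continuous_map_preimage:
  assumes "continuous_map X Y f" "gdelta_in Y H"
  shows "gdelta_in X {x \<in> topspace X. f x \<in> H}"
proof -
  obtain C where C: "\<And>n. openin Y (C n)" "\<And>n. C (Suc n) \<subseteq> C n" "\<Inter> (range C) = H"
    using assms(2) unfolding gdelta_in_descending by blast
  show ?thesis
    unfolding gdelta_in_descending
  proof (intro exI conjI allI)
    show "openin X {x \<in> topspace X. f x \<in> C n}" for n
      using openin_continuous_map_preimage[OF assms(1) C(1)] .
    show "{x \<in> topspace X. f x \<in> C (Suc n)} \<subseteq> {x \<in> topspace X. f x \<in> C n}" for n
      using C(2) by blast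
    show "\<Inter> (range (\<lambda>n. {x \<in> topspace X. f x \<in> C n})) = {x \<in> topspace X. f x \<in> H}"
      using C(3) by blast
  qed
qed

lemma cech_analytic_continuous_map_preimage:
  assumes g: "continuous_map X Y g" and "cech_analytic Y S"
  shows "cech_analytic X {x \<in> topspace X. g x \<in> S}"
proof -
  obtain F H where F: "closedin (prod_topology Y baire_space) F"
    and H: "gdelta_in (prod_topology Y baire_space) H" and S: "S = fst ` (F \<inter> H)"
    using assms(2) unfolding cech_analytic_def by blast
  define h where "h = (\<lambda>(x, b :: nat \<Rightarrow> nat). (g x, b))"
  have h: "continuous_map (prod_topology X baire_space) (prod_topology Y baire_space) h"
    using g by (simp add: h_def continuous_map_prod_top)
  define F' where "F' = {p \<in> topspace (prod_topology X baire_space). h p \<in> F}"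
  define H' where "H' = {p \<in> topspace (prod_topology X baire_space). h p \<in> H}"
  have "{x \<in> topspace X. g x \<in> S} = fst ` (F' \<inter> H')"
  proof (intro equalityI subsetI)
    fix x assume "x \<in> {x \<in> topspace X. g x \<in> S}"
    then obtain b where x: "x \<in> topspace X" "(g x, b) \<in> F \<inter> H"
      unfolding S by force
    then have "b \<in> topspace baire_space"
      using closedin_subset[OF F] by auto
    with x have "(x, b) \<in> F' \<inter> H'"
      by (simp add: F'_def H'_def h_def)
    then show "x \<in> fst ` (F' \<inter> H')"
      by (metis fst_conv image_eqI)
  next
    fix x assume "x \<in> fst ` (F' \<inter> H')"
    then obtain b where "(x, b) \<in> F' \<inter> H'"
      by force
    then have "x \<in> topspace X" "(g x, b) \<in> F \<inter> H"
      by (simp_all add: F'_def H'_def h_def)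
    then show "x \<in> {x \<in> topspace X. g x \<in> S}"
      unfolding S by force
  qed
  moreover have "closedin (prod_topology X baire_space) F'"
    unfolding F'_def using closedin_continuous_map_preimage[OF h F] .
  moreover have "gdelta_in (prod_topology X baire_space) H'"
    unfolding H'_def using gdelta_in_continuous_map_preimage[OF h H] .
  ultimately show ?thesis
    unfolding cech_analytic_def by blast
qed

lemma openin_discrete_product_contains_cylinder:
  assumes "openin (product_topology (\<lambda>_::nat. discrete_topology UNIV) UNIV) V" "f \<in> V"
  shows "\<exists>n. \<forall>g. (\<forall>i<n. g i = f i) \<longrightarrow> g \<in> V"
proof -
  obtain U where U: "finite {i. U i \<noteq> UNIV}" "f \<in> PiE UNIV U" "PiE UNIV U \<subseteq> V"
    using assms unfolding openin_product_topology_alt by auto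
  obtain n where n: "{i. U i \<noteq> UNIV} \<subseteq> {..<n}"
    using U(1) finite_nat_bounded by blast
  have "g \<in> PiE UNIV U" if g: "\<forall>i<n. g i = f i" for g
  proof -
    have "g i \<in> U i" for i
    proof (cases "i < n")
      case True
      then show ?thesis
        using g U(2) by (auto simp: PiE_def Pi_def)
    next
      case False
      then show ?thesis
        using n by auto
    qed
    then show ?thesis
      by (auto simp: PiE_def Pi_def)
  qed
  then have "\<forall>g. (\<forall>i<n. g i = f i) \<longrightarrow> g \<in> V"
    using U(3) by (meson subsetD)
  then show ?thesis
    by blast
qed

definition cylinder :: "bool list \<times> nat list \<Rightarrow> ((nat \<Rightarrow> bool) \<times> (nat \<Rightarrow> nat)) set" where
  "cylinder k = {(f, g). map f [0..<length (fst k)] = fst k \<and> map g [0..<length (snd k)] = snd k}"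

lemma openin_contains_cylinder:
  assumes "openin (prod_topology cantor_cube baire_space) U" "p \<in> U"
  shows "\<exists>k. p \<in> cylinder k \<and> cylinder k \<subseteq> U"
proof -
  obtain f g where p: "p = (f, g)"
    by (cases p)
  obtain V W where VW: "openin cantor_cube V" "openin baire_space W" "f \<in> V" "g \<in> W" "V \<times> W \<subseteq> U"
    using assms unfolding p openin_prod_topology_alt by meson
  obtain m where m: "\<And>f'. \<forall>i<m. f' i = f i \<Longrightarrow> f' \<in> V"
    using openin_discrete_product_contains_cylinder[of V f] VW(1,3) by (auto simp: cantor_cube_def)
  obtain n where n: "\<And>g'. \<forall>i<n. g' i = g i \<Longrightarrow> g' \<in> W"
    using openin_discrete_product_contains_cylinder[of W g] VW(2,4) by (auto simp: baire_space_def)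
  have "cylinder (map f [0..<m], map g [0..<n]) \<subseteq> U"
    using m n VW(5) by (auto simp: cylinder_def)
  moreover have "p \<in> cylinder (map f [0..<m], map g [0..<n])"
    by (simp add: p cylinder_def)
  ultimately show ?thesis
    by blast
qed

text \<open>A code \<open>c\<close> lists at positions \<open>prod_encode (0, _)\<close> the cylinders missing a closed set \<open>F\<close>
  and at positions \<open>prod_encode (Suc n, _)\<close> those inside the \<open>n\<close>-th open set of a G-delta set \<open>H\<close>;
  \<open>decode c\<close> is then the projection of \<open>F \<inter> H\<close>.\<close>

definition decode :: "(nat \<Rightarrow> bool) \<Rightarrow> (nat \<Rightarrow> bool) set" where
  "decode c = fst ` {p. (\<forall>k. c (prod_encode (0, to_nat k)) \<longrightarrow> p \<notin> cylinder k) \<and>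
                        (\<forall>n. \<exists>k. c (prod_encode (Suc n, to_nat k)) \<and> p \<in> cylinder k)}"

lemma closedin_Int_Inter_eq_cylinders:
  assumes F: "closedin (prod_topology cantor_cube baire_space) F"
    and C: "\<And>n :: nat. openin (prod_topology cantor_cube baire_space) (C n)"
  shows "F \<inter> \<Inter> (range C) = {p. (\<forall>k. cylinder k \<subseteq> - F \<longrightarrow> p \<notin> cylinder k) \<and>
                                 (\<forall>n. \<exists>k. cylinder k \<subseteq> C n \<and> p \<in> cylinder k)}"
proof (intro equalityI subsetI CollectI conjI allI impI)
  fix p k assume "p \<in> F \<inter> \<Inter> (range C)" "cylinder k \<subseteq> - F"
  then show "p \<notin> cylinder k"
    by blast
next
  fix p n assume "p \<in> F \<inter> \<Inter> (range C)"
  then have "p \<in> C n"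
    by blast
  then show "\<exists>k. cylinder k \<subseteq> C n \<and> p \<in> cylinder k"
    using openin_contains_cylinder[OF C] by blast
next
  fix p assume p: "p \<in> {p. (\<forall>k. cylinder k \<subseteq> - F \<longrightarrow> p \<notin> cylinder k) \<and>
                             (\<forall>n. \<exists>k. cylinder k \<subseteq> C n \<and> p \<in> cylinder k)}"
  have "- F = topspace (prod_topology cantor_cube baire_space) - F"
    by auto
  then have "openin (prod_topology cantor_cube baire_space) (- F)"
    using F closedin_def by metis
  have "p \<in> F"
  proof (rule ccontr)
    assume "p \<notin> F"
    then obtain k where "p \<in> cylinder k" "cylinder k \<subseteq> - F"
      using openin_contains_cylinder[OF \<open>openin _ (- F)\<close>] by blast
    with p show False
      by blast
  qed
  moreover have "p \<in> C n" for n
    using p by blast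
  ultimately show "p \<in> F \<inter> \<Inter> (range C)"
    by blast
qed

lemma cech_analytic_cantor_cube_imp_decode:
  assumes "cech_analytic cantor_cube S"
  shows "\<exists>c. S = decode c"
proof -
  let ?Z = "prod_topology cantor_cube baire_space"
  obtain F H where F: "closedin ?Z F" and H: "gdelta_in ?Z H" and S: "S = fst ` (F \<inter> H)"
    using assms unfolding cech_analytic_def by blast
  obtain C where C: "\<And>n :: nat. openin ?Z (C n)" "\<Inter> (range C) = H"
    using H unfolding gdelta_in_descending by blast
  define c where "c x = (case prod_decode x of
                           (0, j) \<Rightarrow> cylinder (from_nat j) \<subseteq> - F
                         | (Suc n, j) \<Rightarrow> cylinder (from_nat j) \<subseteq> C n)" for x
  have "c (prod_encode (0, to_nat k)) \<longleftrightarrow> cylinder k \<subseteq> - F"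
       "c (prod_encode (Suc n, to_nat k)) \<longleftrightarrow> cylinder k \<subseteq> C n" for k n
    by (simp_all add: c_def)
  then have "S = decode c"
    by (simp add: S decode_def closedin_Int_Inter_eq_cylinders[OF F C(1)] flip: C(2))
  then show ?thesis
    by blast
qed

lemma not_cech_analytic_diagonal: "\<not> cech_analytic cantor_cube {c. c \<notin> decode c}"
proof
  assume "cech_analytic cantor_cube {c. c \<notin> decode c}"
  then obtain c where "{c. c \<notin> decode c} = decode c"
    using cech_analytic_cantor_cube_imp_decode by blast
  then show False
    by blast
qed

text \<open>Since \<open>Y i\<close> is the only member of the family containing the marker \<open>m i\<close>, the image is cut
  out of the open set of points carrying a marker of \<open>K\<close> by the closed conditions
  \<open>m j \<in> X \<longrightarrow> X = Y j\<close>.\<close>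

lemma cech_analytic_marked_image:
  assumes marker: "\<And>i j. m j \<in> Y i \<longleftrightarrow> j = i"
  shows "cech_analytic powerset_cube (Y ` K)"
proof -
  have "closedin powerset_cube {X. m j \<in> X \<longrightarrow> X = Y j}" for j
  proof -
    have eq: "{X. m j \<in> X \<longrightarrow> X = Y j} = {X. m j \<notin> X} \<union> {Y j}"
      by auto
    show ?thesis
      unfolding eq
      by (intro closedin_Un closedin_powerset_cube_not_mem
          closedin_Hausdorff_singleton Hausdorff_space_powerset_cube) simp
  qed
  then have "closedin powerset_cube (\<Inter>j. {X. m j \<in> X \<longrightarrow> X = Y j})"
    by (intro closedin_INT) auto
  moreover have "openin powerset_cube (\<Union>i\<in>K. {X. m i \<in> X})"
    by (intro openin_Union) (auto simp: openin_powerset_cube_mem)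
  moreover have "Y ` K = (\<Inter>j. {X. m j \<in> X \<longrightarrow> X = Y j}) \<inter> (\<Union>i\<in>K. {X. m i \<in> X})"
  proof (intro equalityI subsetI)
    fix X assume "X \<in> (\<Inter>j. {X. m j \<in> X \<longrightarrow> X = Y j}) \<inter> (\<Union>i\<in>K. {X. m i \<in> X})"
    then obtain i where "i \<in> K" "m i \<in> X" "X = Y i"
      by blast
    then show "X \<in> Y ` K"
      by blast
  qed (auto simp: marker)
  ultimately show ?thesis
    by (simp add: cech_analytic_closedin_Int_openin)
qed

locale cantor_marking =
  fixes e :: "nat + (nat \<Rightarrow> bool) \<Rightarrow> 'a"
  assumes inj_e: "inj e"
begin

definition embed :: "(nat \<Rightarrow> bool) \<Rightarrow> 'a set" where
  "embed f = e ` Inl ` {n. f n}"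

definition marked_embeddings :: "(nat \<Rightarrow> bool) set \<Rightarrow> 'a set set" where
  "marked_embeddings S = (\<lambda>f. insert (e (Inr f)) (embed f)) ` S"

definition markers :: "'a set set" where
  "markers = range (\<lambda>f. {e (Inr f)})"

lemma e_eq_iff [simp]: "e x = e y \<longleftrightarrow> x = y"
  using inj_e by (simp add: inj_eq)

lemma mem_embed_iff [simp]: "e (Inl n) \<in> embed f \<longleftrightarrow> f n" "e (Inr g) \<notin> embed f"
  by (auto simp: embed_def)

lemma embed_eq_iff [simp]: "embed f = embed g \<longleftrightarrow> f = g"
proof
  assume "embed f = embed g"
  then have "f n \<longleftrightarrow> g n" for n
    using mem_embed_iff(1) by blast
  then show "f = g"
    by blast
qed simp

lemma continuous_map_embed: "continuous_map cantor_cube powerset_cube embed"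
  unfolding continuous_map_powerset_cube_iff
proof
  fix i
  show "continuous_map cantor_cube (discrete_topology UNIV) (\<lambda>f. i \<in> embed f)"
  proof (cases "i \<in> range (e \<circ> Inl)")
    case True
    then obtain n where "i = e (Inl n)"
      by auto
    then show ?thesis
      using continuous_map_product_projection[of n UNIV "\<lambda>_. discrete_topology UNIV"]
      by (simp add: cantor_cube_def)
  next
    case False
    then have "(\<lambda>f. i \<in> embed f) = (\<lambda>f. False)"
      by (auto simp: embed_def)
    then show ?thesis
      by simp
  qed
qed

lemma embed_in_set_mult_iff:
  "embed f \<in> marked_embeddings S <#>\<^bsub>symdiff_group\<^esub> markers \<longleftrightarrow> f \<in> S"
proof
  assume "embed f \<in> marked_embeddings S <#>\<^bsub>symdiff_group\<^esub> markers"
  then obtain g h where g: "g \<in> S"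
    and eq: "embed f = insert (e (Inr g)) (embed g) \<otimes>\<^bsub>symdiff_group\<^esub> {e (Inr h)}"
    by (auto simp: set_mult_def marked_embeddings_def markers_def)
  have "g = h"
  proof (rule ccontr)
    assume "g \<noteq> h"
    then have "e (Inr g) \<in> embed f"
      by (simp add: eq)
    then show False
      by simp
  qed
  then have "embed f = embed g"
    using eq by auto
  then show "f \<in> S"
    using g by simp
next
  assume "f \<in> S"
  moreover have "embed f = insert (e (Inr f)) (embed f) \<otimes>\<^bsub>symdiff_group\<^esub> {e (Inr f)}"
    by auto
  ultimately show "embed f \<in> marked_embeddings S <#>\<^bsub>symdiff_group\<^esub> markers"
    unfolding set_mult_def marked_embeddings_def markers_def by blast
qed

lemma cech_analytic_marked_embeddings: "cech_analytic powerset_cube (marked_embeddings S)"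
  unfolding marked_embeddings_def by (rule cech_analytic_marked_image) auto

lemma cech_analytic_markers: "cech_analytic powerset_cube markers"
  unfolding markers_def by (rule cech_analytic_marked_image) auto

lemma not_cech_analytic_set_mult:
  assumes "\<not> cech_analytic cantor_cube S"
  shows "\<not> cech_analytic powerset_cube (marked_embeddings S <#>\<^bsub>symdiff_group\<^esub> markers)"
proof
  assume "cech_analytic powerset_cube (marked_embeddings S <#>\<^bsub>symdiff_group\<^esub> markers)"
  then have "cech_analytic cantor_cube
               {f \<in> topspace cantor_cube. embed f \<in> marked_embeddings S <#>\<^bsub>symdiff_group\<^esub> markers}"
    by (rule cech_analytic_continuous_map_preimage[OF continuous_map_embed])
  then show False
    using assms by (simp add: embed_in_set_mult_iff)
qed

end

lemma inj_real_set_code: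
  "inj (case_sum (\<lambda>n. {real n}) (\<lambda>f. (\<lambda>n. - real (Suc n)) ` {n. f n}))"
  (is "inj ?e")
proof (rule injI)
  fix x y
  assume eq: "?e x = ?e y"
  have inj_neg: "inj (\<lambda>n. - real (Suc n))"
    by (rule injI) simp
  have Inl_Inr: "{real n} \<noteq> (\<lambda>n. - real (Suc n)) ` A" for n A
  proof
    assume "{real n} = (\<lambda>n. - real (Suc n)) ` A"
    then have "real n \<in> (\<lambda>n. - real (Suc n)) ` A"
      by (metis singletonI)
    then show False
      by auto
  qed
  show "x = y"
  proof (cases x; cases y)
    fix f g assume "x = Inr f" "y = Inr g"
    with eq have "{n. f n} = {n. g n}"
      using inj_image_eq_iff[OF inj_neg] by simp
    then show "x = y"
      using \<open>x = Inr f\<close> \<open>y = Inr g\<close> by auto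
  qed (use eq Inl_Inr in \<open>simp_all, metis\<close>)
qed

theorem proposition5p7:
  "\<exists>(G :: real set set monoid) (T :: real set set topology) A B.
     comm_group G \<and> topological_group G T \<and>
     compact_space T \<and> Hausdorff_space T \<and>
     cech_analytic T A \<and> cech_analytic T B \<and>
     \<not> cech_analytic T (A <#>\<^bsub>G\<^esub> B)"
proof -
  interpret cantor_marking "case_sum (\<lambda>n. {real n}) (\<lambda>f. (\<lambda>n. - real (Suc n)) ` {n. f n})"
    by unfold_locales (rule inj_real_set_code)
  let ?S = "{c. c \<notin> decode c}"
  show ?thesis
  proof (intro exI conjI)
    show "comm_group symdiff_group"
      by (rule comm_group_symdiff_group)
    show "topological_group symdiff_group powerset_cube"
      by (rule topological_group_symdiff_group)
    show "compact_space powerset_cube"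
      by (rule compact_space_powerset_cube)
    show "Hausdorff_space powerset_cube"
      by (rule Hausdorff_space_powerset_cube)
    show "cech_analytic powerset_cube (marked_embeddings ?S)"
      by (rule cech_analytic_marked_embeddings)
    show "cech_analytic powerset_cube markers"
      by (rule cech_analytic_markers)
    show "\<not> cech_analytic powerset_cube (marked_embeddings ?S <#>\<^bsub>symdiff_group\<^esub> markers)"
      by (rule not_cech_analytic_set_mult[OF not_cech_analytic_diagonal])
  qed
qed

end
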